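(* Let $n\ge1$, $0<\tau_0\le\infty$, $\sigma\in J_n^+$, $\Lambda$ a continuous positive function, and let $V\ge0$ be continuous with $V(x,t)\ge\Lambda(t)|x|^\sigma$ for $|x|\ge1$, $0<t<\tau_0$. Then there are a non-increasing function $\eta:\mathbb{R}\to(0,\infty)$ and, for each $d\ge0$, a constant $\varepsilon_0>0$ such that: (i) for every $P\ge0$, $\mathcal{B}\big(V e^{-P|\cdot|}\big)(x,t)\ge\eta(P)\Lambda(t)e^{-P|x|}$ on $Q_{\tau_0}$; (ii) for every $d\ge0$, $\mathcal{B}\big(V|\cdot|^d\big)(x,t)\ge\varepsilon_0\Lambda(t)|x|^{\sigma+d}$ on $Q_{\tau_0}$; moreover, for $d$ ranging in a bounded subset of $[0,\infty)$, $\varepsilon_0$ can be chosen independent of $d$.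
   Context: $J_n^+=\{0\}\cup[1,\infty)$ if $n=1$, $[0,\infty)$ if $n\ge2$. $\mathcal{B}$ acts in the $x$-variable: $\mathcal{B}\varphi=B*\varphi$ with $B=\mathcal{F}^{-1}((1+|\xi|^2)^{-1})$. $Q_{\tau_0}=\mathbb{R}^n\times[0,\tau_0)$. *)

theory Defs
  imports "HOL-Analysis.Analysis"
begin

text \<open>Bessel kernel B = inverse Fourier transform of (1+|xi|^2)^(-1) on R^n
  (Fourier convention F f(xi) = int e^(-i x.xi) f(x) dx), written via the
  subordination formula  B(x) = int_0^oo (4 pi s)^(-n/2) e^(-|x|^2/(4s)) e^(-s) ds,
  valued in [0,oo] (B(0) = oo when n >= 2).\<close>
definition bessel_kernel :: "'a::euclidean_space \<Rightarrow> ennreal" where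
  "bessel_kernel x = (\<integral>\<^sup>+ s. ennreal (if 0 < s then
       (4 * pi * s) powr (- real DIM('a) / 2) * exp (- (norm x)\<^sup>2 / (4 * s)) * exp (- s)
     else 0) \<partial>lborel)"

definition bessel_op :: "('a::euclidean_space \<Rightarrow> real) \<Rightarrow> 'a \<Rightarrow> ennreal" where
  "bessel_op \<phi> x = (\<integral>\<^sup>+ y. bessel_kernel (x - y) * ennreal (\<phi> y) \<partial>lborel)"

definition rpow :: "real \<Rightarrow> real \<Rightarrow> real" where
  "rpow r a = (if a = 0 then 1 else r powr a)"

definition Jplus :: "nat \<Rightarrow> real set" where
  "Jplus n = (if n = 1 then {0} \<union> {1..} else {0..})"

definition time_int :: "ereal \<Rightarrow> real set" where
  "time_int \<tau>0 = {t. 0 \<le> t \<and> ereal t < \<tau>0}"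

end

(* The Bessel kernel is bounded below by a positive constant on every ball, so B g(x) is at
   least a constant times the infimum of g over any unit ball within a fixed distance of x.  For every x there is such a
   ball lying in the annulus 1 <= |y|, |x|/2 <= |y| <= |x| + 4: the ball around x itself if
   |x| >= 2, a fixed ball around a point of norm 3 otherwise.  On it V(y,t) >= Lambda(t)|y|^sigma
   (extended to t = 0 by continuity), and both weights e^(-P|y|) and |y|^d are comparable to
   their values at x, with constants e^(-4P) and 2^(-sigma-d). *)

theory Submission
  imports Defs
begin

(* The integrand of the subordination formula bounded below on s in [1,2], for |z| <= R. *)
definition bessel_kernel_lower :: "nat \<Rightarrow> real \<Rightarrow> real" where
  "bessel_kernel_lower n R = (8 * pi) powr (- real n / 2) * exp (- R\<^sup>2 / 4) * exp (- 2)"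

lemma bessel_kernel_lower_pos: "0 < bessel_kernel_lower n R"
  by (simp add: bessel_kernel_lower_def)

lemma bessel_kernel_ge:
  fixes z :: "'a::euclidean_space"
  assumes "norm z \<le> R"
  shows "ennreal (bessel_kernel_lower DIM('a) R) \<le> bessel_kernel z"
proof -
  let ?k = "bessel_kernel_lower DIM('a) R"
  have on_1_2: "ennreal ?k * indicator {1..2} s \<le> ennreal (if 0 < s then
       (4 * pi * s) powr (- real DIM('a) / 2) * exp (- (norm z)\<^sup>2 / (4 * s)) * exp (- s)
     else 0)" for s
  proof (cases "s \<in> {1..2}")
    case True
    then have s: "1 \<le> s" "s \<le> 2" by auto
    have "(8 * pi) powr (- real DIM('a) / 2) \<le> (4 * pi * s) powr (- real DIM('a) / 2)"
      by (rule powr_mono2') (use s in auto)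
    moreover have "exp (- R\<^sup>2 / 4) \<le> exp (- (norm z)\<^sup>2 / (4 * s))"
    proof -
      have "(norm z)\<^sup>2 / (4 * s) \<le> (norm z)\<^sup>2 / 4"
        using s by (intro divide_left_mono) auto
      also have "\<dots> \<le> R\<^sup>2 / 4"
        using assms by (intro divide_right_mono power_mono) auto
      finally show ?thesis by simp
    qed
    moreover have "exp (- 2) \<le> exp (- s)" using s by simp
    ultimately have "?k \<le> (4 * pi * s) powr (- real DIM('a) / 2) * exp (- (norm z)\<^sup>2 / (4 * s)) * exp (- s)"
      unfolding bessel_kernel_lower_def by (intro mult_mono) auto
    then show ?thesis using s by (auto intro: ennreal_leI)
  qed auto
  have "ennreal ?k = (\<integral>\<^sup>+ s. ennreal ?k * indicator {1..2::real} s \<partial>lborel)"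
    by (subst nn_integral_cmult_indicator) auto
  also have "\<dots> \<le> bessel_kernel z"
    unfolding bessel_kernel_def by (intro nn_integral_mono on_1_2)
  finally show ?thesis .
qed

lemma bessel_op_ge_on_set:
  fixes x :: "'a::euclidean_space"
  assumes "A \<in> sets lborel" "0 \<le> a" and "\<And>y. y \<in> A \<Longrightarrow> a \<le> g y \<and> norm (x - y) \<le> R"
  shows "ennreal (bessel_kernel_lower DIM('a) R * a) * emeasure lborel A \<le> bessel_op g x"
proof -
  let ?k = "bessel_kernel_lower DIM('a) R"
  have on_A: "ennreal (?k * a) * indicator A y \<le> bessel_kernel (x - y) * ennreal (g y)" for y
  proof (cases "y \<in> A")
    case True
    then have "ennreal ?k * ennreal a \<le> bessel_kernel (x - y) * ennreal (g y)"
      using assms(3) by (intro mult_mono bessel_kernel_ge ennreal_leI) auto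
    then show ?thesis
      using True bessel_kernel_lower_pos[of "DIM('a)" R] assms(2) by (simp add: ennreal_mult)
  qed auto
  have "ennreal (?k * a) * emeasure lborel A = (\<integral>\<^sup>+ y. ennreal (?k * a) * indicator A y \<partial>lborel)"
    using assms(1) by (simp add: nn_integral_cmult_indicator)
  also have "\<dots> \<le> bessel_op g x"
    unfolding bessel_op_def by (intro nn_integral_mono on_A)
  finally show ?thesis .
qed

lemma unit_ball_in_annulus:
  fixes x :: "'a::euclidean_space"
  obtains c where "\<And>y. y \<in> ball c 1 \<Longrightarrow>
    1 \<le> norm y \<and> norm x / 2 \<le> norm y \<and> norm y \<le> norm x + 4 \<and> norm (x - y) \<le> 6"
proof (cases "2 \<le> norm x")
  case True
  have "norm x - 1 \<le> norm y \<and> norm y \<le> norm x + 1 \<and> norm (x - y) < 1" if "y \<in> ball x 1" for y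
    using that norm_triangle_ineq2[of x y] norm_triangle_ineq3[of x y]
    by (auto simp: dist_norm norm_minus_commute)
  with True show ?thesis by (intro that[of x]) fastforce
next
  case False
  obtain e :: 'a where "norm e = 1" using norm_Basis SOME_Basis by blast
  then have near_3e: "2 \<le> norm y \<and> norm y \<le> 4" if "y \<in> ball (3 *\<^sub>R e) 1" for y
    using that norm_triangle_ineq2[of "3 *\<^sub>R e" y] norm_triangle_ineq3[of "3 *\<^sub>R e" y]
    by (auto simp: dist_norm norm_minus_commute)
  show ?thesis
  proof (rule that)
    fix y assume "y \<in> ball (3 *\<^sub>R e) 1"
    with near_3e have "2 \<le> norm y" "norm y \<le> 4" by auto
    with False show "1 \<le> norm y \<and> norm x / 2 \<le> norm y \<and> norm y \<le> norm x + 4 \<and> norm (x - y) \<le> 6"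
      using norm_ge_zero[of x] norm_triangle_ineq4[of x y] by linarith
  qed
qed

definition bessel_op_lower :: "nat \<Rightarrow> real" where
  "bessel_op_lower n = bessel_kernel_lower n 6 * unit_ball_vol (real n)"

lemma bessel_op_lower_pos: "0 < bessel_op_lower n"
  by (simp add: bessel_op_lower_def bessel_kernel_lower_pos)

lemma bessel_op_ge_annulus_minorant:
  fixes x :: "'a::euclidean_space"
  assumes "0 \<le> a"
    and "\<And>y. 1 \<le> norm y \<Longrightarrow> norm x / 2 \<le> norm y \<Longrightarrow> norm y \<le> norm x + 4 \<Longrightarrow> a \<le> g y"
  shows "ennreal (bessel_op_lower DIM('a) * a) \<le> bessel_op g x"
proof -
  obtain c where c: "\<And>y. y \<in> ball c 1 \<Longrightarrow>
      1 \<le> norm y \<and> norm x / 2 \<le> norm y \<and> norm y \<le> norm x + 4 \<and> norm (x - y) \<le> 6"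
    using unit_ball_in_annulus[of x] by blast
  have "ennreal (bessel_kernel_lower DIM('a) 6 * a) * emeasure lborel (ball c 1) \<le> bessel_op g x"
    using assms c by (intro bessel_op_ge_on_set) auto
  then show ?thesis
    using assms(1) bessel_kernel_lower_pos[of "DIM('a)" 6]
    by (simp add: emeasure_ball bessel_op_lower_def ennreal_mult'[symmetric] mult_ac)
qed

lemma rpow_nonneg: "0 \<le> rpow r a"
  by (simp add: rpow_def)

lemma rpow_ge_one: "1 \<le> r \<Longrightarrow> 0 \<le> a \<Longrightarrow> 1 \<le> rpow r a"
  by (simp add: rpow_def ge_one_powr_ge_zero)

lemma rpow_add: "0 < r \<Longrightarrow> rpow r (a + b) = rpow r a * rpow r b"
  by (auto simp: rpow_def powr_add[symmetric])

lemma rpow_mono: "0 \<le> r \<Longrightarrow> r \<le> r' \<Longrightarrow> 0 \<le> a \<Longrightarrow> rpow r a \<le> rpow r' a"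
  by (simp add: rpow_def powr_mono2)

lemma rpow_half_ge:
  assumes "0 \<le> r" "0 \<le> a" "a \<le> S"
  shows "2 powr (- S) * rpow r a \<le> rpow (r / 2) a"
proof -
  have "2 powr (- S) \<le> 1 / 2 powr a"
    using assms(3) powr_mono[of "- S" "- a" 2] by (simp add: powr_minus_divide)
  then have "2 powr (- S) * rpow r a \<le> rpow r a / 2 powr a"
    using rpow_nonneg[of r a] by (metis mult_right_mono times_divide_eq_left mult_1)
  also have "\<dots> = rpow (r / 2) a"
    using assms(1) by (simp add: rpow_def powr_divide)
  finally show ?thesis .
qed

lemma bessel_op_exp_weight_ge:
  fixes x :: "'a::euclidean_space"
  assumes "0 \<le> P" "0 \<le> s" "0 \<le> l" and v: "\<And>y. 1 \<le> norm y \<Longrightarrow> l * rpow (norm y) s \<le> v y"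
  shows "ennreal (bessel_op_lower DIM('a) * exp (- 4 * P) * l * exp (- P * norm x))
    \<le> bessel_op (\<lambda>y. v y * exp (- P * norm y)) x"
proof -
  have "l * (exp (- 4 * P) * exp (- P * norm x)) \<le> v y * exp (- P * norm y)"
    if "1 \<le> norm y" "norm y \<le> norm x + 4" for y
  proof (rule mult_mono)
    show l_le: "l \<le> v y"
      using v[OF that(1)] mult_left_mono[OF rpow_ge_one[OF that(1) assms(2)] assms(3)] by simp
    with assms(3) show "0 \<le> v y" by simp
    have "P * norm y \<le> P * (norm x + 4)"
      using that(2) assms(1) by (rule mult_left_mono)
    then show "exp (- 4 * P) * exp (- P * norm x) \<le> exp (- P * norm y)"
      by (simp add: exp_add[symmetric] algebra_simps)
  qed (use assms(3) in auto)
  with assms(3) show ?thesis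
    using bessel_op_ge_annulus_minorant[where x = x and a = "l * (exp (- 4 * P) * exp (- P * norm x))"]
    by (simp add: mult_ac)
qed

lemma bessel_op_power_weight_ge:
  fixes x :: "'a::euclidean_space"
  assumes "0 \<le> s" "0 \<le> d" "s + d \<le> S" "0 \<le> l"
    and v: "\<And>y. 1 \<le> norm y \<Longrightarrow> l * rpow (norm y) s \<le> v y"
  shows "ennreal (bessel_op_lower DIM('a) * 2 powr (- S) * l * rpow (norm x) (s + d))
    \<le> bessel_op (\<lambda>y. v y * rpow (norm y) d) x"
proof -
  have "l * (2 powr (- S) * rpow (norm x) (s + d)) \<le> v y * rpow (norm y) d"
    if "1 \<le> norm y" "norm x / 2 \<le> norm y" for y
  proof -
    have "2 powr (- S) * rpow (norm x) (s + d) \<le> rpow (norm x / 2) (s + d)"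
      using assms by (intro rpow_half_ge) auto
    also have "\<dots> \<le> rpow (norm y) (s + d)"
      using that(2) assms by (intro rpow_mono) auto
    also have "\<dots> = rpow (norm y) s * rpow (norm y) d"
      using that(1) by (intro rpow_add) linarith
    finally have "l * (2 powr (- S) * rpow (norm x) (s + d)) \<le> l * rpow (norm y) s * rpow (norm y) d"
      using assms(4) by (simp add: mult_left_mono mult.assoc)
    also have "\<dots> \<le> v y * rpow (norm y) d"
      using v[OF that(1)] by (rule mult_right_mono) (rule rpow_nonneg)
    finally show ?thesis .
  qed
  with assms(4) show ?thesis
    using bessel_op_ge_annulus_minorant[where x = x and a = "l * (2 powr (- S) * rpow (norm x) (s + d))"]
    by (simp add: rpow_nonneg mult_ac)
qed

lemma le_at_initial_time_by_continuity:
  fixes f g :: "real \<Rightarrow> real"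
  assumes "0 < \<tau>0" "continuous_on (time_int \<tau>0) f" "continuous_on (time_int \<tau>0) g"
    and le: "\<And>t. 0 < t \<Longrightarrow> ereal t < \<tau>0 \<Longrightarrow> f t \<le> g t" and t: "t \<in> time_int \<tau>0"
  shows "f t \<le> g t"
proof (cases "t = 0")
  case True
  obtain t1 where t1: "0 < t1" "ereal t1 < \<tau>0"
    using ereal_dense2[OF assms(1)] by (auto simp: zero_ereal_def)
  have below_\<tau>0: "ereal u < \<tau>0" if "u \<le> t1" for u
    using that t1(2) by (metis ereal_less_eq(3) le_less_trans)
  have "{0..t1} \<subseteq> time_int \<tau>0"
    using below_\<tau>0 by (auto simp: time_int_def)
  then have "continuous_on (closure {0<..<t1}) (\<lambda>t. g t - f t)"
    using t1 assms(2,3) by (auto intro!: continuous_intros intro: continuous_on_subset)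
  moreover have "0 \<in> closure {0<..<t1}"
    using t1 by simp
  moreover have "g u - f u \<ge> 0" if "u \<in> {0<..<t1}" for u
    using that below_\<tau>0 le[of u] by auto
  ultimately have "g 0 - f 0 \<ge> 0"
    by (rule continuous_ge_on_closure)
  with True show ?thesis by simp
next
  case False
  with t le show ?thesis by (simp add: time_int_def)
qed

theorem mainTheorem14:
  fixes V :: "'a::euclidean_space \<Rightarrow> real \<Rightarrow> real"
    and \<Lambda> :: "real \<Rightarrow> real" and \<sigma> :: real and \<tau>0 :: ereal
  assumes "0 < \<tau>0"
    and "\<sigma> \<in> Jplus DIM('a)"
    and "continuous_on (time_int \<tau>0) \<Lambda>"
    and "\<forall>t\<in>time_int \<tau>0. 0 < \<Lambda> t"
    and "continuous_on (UNIV \<times> time_int \<tau>0) (\<lambda>(x, t). V x t)"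
    and "\<forall>x. \<forall>t\<in>time_int \<tau>0. 0 \<le> V x t"
    and "\<forall>x t. 1 \<le> norm x \<longrightarrow> 0 < t \<longrightarrow> ereal t < \<tau>0 \<longrightarrow>
           \<Lambda> t * rpow (norm x) \<sigma> \<le> V x t"
  shows "\<exists>\<eta> :: real \<Rightarrow> real. antimono \<eta> \<and> (\<forall>P. 0 < \<eta> P) \<and>
     (\<forall>P \<ge> 0. \<forall>x. \<forall>t\<in>time_int \<tau>0.
        ennreal (\<eta> P * \<Lambda> t * exp (- P * norm x))
          \<le> bessel_op (\<lambda>y. V y t * exp (- P * norm y)) x) \<and>
     (\<forall>D. D \<subseteq> {0..} \<longrightarrow> bounded D \<longrightarrow>
        (\<exists>\<epsilon>0 > 0. \<forall>d\<in>D. \<forall>x. \<forall>t\<in>time_int \<tau>0.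
           ennreal (\<epsilon>0 * \<Lambda> t * rpow (norm x) (\<sigma> + d))
             \<le> bessel_op (\<lambda>y. V y t * rpow (norm y) d) x))"
proof -
  let ?C = "bessel_op_lower DIM('a)"
  have \<sigma>: "0 \<le> \<sigma>" using assms(2) by (auto simp: Jplus_def split: if_splits)
  have V_ge: "\<Lambda> t * rpow (norm y) \<sigma> \<le> V y t" if "t \<in> time_int \<tau>0" "1 \<le> norm y" for t y
  proof (rule le_at_initial_time_by_continuity[OF assms(1) _ _ _ that(1)])
    show "continuous_on (time_int \<tau>0) (V y)"
      by (rule continuous_on_compose2[OF assms(5), where f = "Pair y", simplified])
        (auto intro: continuous_intros)
  qed (use assms(3,7) that(2) in \<open>auto intro: continuous_intros\<close>)
  define \<eta> where "\<eta> P = ?C * exp (- 4 * P)" for P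
  have "ennreal (\<eta> P * \<Lambda> t * exp (- P * norm x)) \<le> bessel_op (\<lambda>y. V y t * exp (- P * norm y)) x"
    if "0 \<le> P" "t \<in> time_int \<tau>0" for P t and x :: 'a
    unfolding \<eta>_def using that \<sigma> assms(4) V_ge by (intro bessel_op_exp_weight_ge[where s = \<sigma>]) auto
  moreover have "\<exists>\<epsilon>0 > 0. \<forall>d\<in>D. \<forall>x. \<forall>t\<in>time_int \<tau>0.
      ennreal (\<epsilon>0 * \<Lambda> t * rpow (norm x) (\<sigma> + d)) \<le> bessel_op (\<lambda>y. V y t * rpow (norm y) d) x"
    if "D \<subseteq> {0..}" "bounded D" for D
  proof -
    obtain M where "\<forall>d\<in>D. norm d \<le> M" using \<open>bounded D\<close> by (auto simp: bounded_iff)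
    with that(1) \<sigma> assms(4) V_ge show ?thesis
      by (intro exI[of _ "?C * 2 powr (- (\<sigma> + M))"] conjI ballI allI bessel_op_power_weight_ge)
        (auto simp: bessel_op_lower_pos)
  qed
  moreover have "antimono \<eta>"
    by (auto simp: antimono_def \<eta>_def intro!: mult_left_mono less_imp_le[OF bessel_op_lower_pos])
  ultimately show ?thesis
    by (intro exI[of _ \<eta>]) (auto simp: \<eta>_def bessel_op_lower_pos)
qed

end
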